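(* Let $A\subseteq B\subseteq C$ be commutative rings with the same identity. If $A$ is a dense subring of $B$ and $B$ is a dense subring of $C$, then $A$ is a dense subring of $C$.
   Context: A subring $A$ of a ring $B$ is dense in $B$ if for every ideal $I$ of $B$ and every $b\in B\setminus \operatorname{rad}(I)$ there exists $a\in B\setminus\operatorname{rad}(I)$ with $ab\in A$. *)

theory Defs
  imports "HOL-Algebra.Algebra"
begin

definition ideal_rad :: "('a, 'b) ring_scheme \<Rightarrow> 'a set \<Rightarrow> 'a set" where
  "ideal_rad R I = {x \<in> carrier R. \<exists>n::nat. x [^]\<^bsub>R\<^esub> n \<in> I}"

definition dense_subring :: "'a set \<Rightarrow> ('a, 'b) ring_scheme \<Rightarrow> bool" where
  "dense_subring A R \<longleftrightarrow> subring A R \<and>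
     (\<forall>I. ideal I R \<longrightarrow>
        (\<forall>b \<in> carrier R - ideal_rad R I.
           \<exists>a \<in> carrier R - ideal_rad R I. a \<otimes>\<^bsub>R\<^esub> b \<in> A))"

end

theory Submission
  imports Defs
begin

text \<open>
  The definition of density can be strengthened: if \<open>A\<close> is dense in a commutative ring \<open>R\<close>
  and \<open>b \<notin> rad I\<close>, there is an \<open>a\<close> with \<open>a b \<in> A\<close> and even \<open>a b \<notin> rad I\<close>. Indeed, apply
  density to the saturation \<open>I : b\<^sup>\<infinity> = {x. \<exists>n. x b\<^sup>n \<in> I}\<close>, whose radical consists of the \<open>x\<close>
  with \<open>x b \<in> rad I\<close>. Now given \<open>c \<notin> rad I\<close> in \<open>C\<close>, density of \<open>B\<close> in \<open>C\<close> yields \<open>d\<close> with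
  \<open>b = d c \<in> B - rad I\<close>, and density of \<open>A\<close> in \<open>B\<close>, applied to the contracted ideal \<open>B \<inter> I\<close>,
  yields \<open>a'\<close> with \<open>a' b \<in> A - rad I\<close>. Then \<open>a = a' d\<close> is the required element: \<open>a c = a' b\<close>.
\<close>

definition ideal_saturation :: "('a, 'b) ring_scheme \<Rightarrow> 'a set \<Rightarrow> 'a \<Rightarrow> 'a set" where
  "ideal_saturation R I c = {x \<in> carrier R. \<exists>n::nat. x \<otimes>\<^bsub>R\<^esub> c [^]\<^bsub>R\<^esub> n \<in> I}"

lemma (in cring) idealI_cring:
  assumes "I \<subseteq> carrier R" and "\<zero> \<in> I"
    and "\<And>a b. a \<in> I \<Longrightarrow> b \<in> I \<Longrightarrow> a \<oplus> b \<in> I"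
    and mult_closed: "\<And>a x. a \<in> I \<Longrightarrow> x \<in> carrier R \<Longrightarrow> x \<otimes> a \<in> I"
  shows "ideal I R"
proof (rule idealI)
  show "subgroup I (add_monoid R)"
  proof (rule add.subgroupI)
    fix a assume a: "a \<in> I"
    then have "\<ominus> a = \<ominus> \<one> \<otimes> a" using assms(1) by (auto simp: l_minus)
    then show "\<ominus> a \<in> I" using mult_closed[OF a] by simp
  qed (use assms in auto)
  show "a \<otimes> x \<in> I" if "a \<in> I" "x \<in> carrier R" for a x
    using that mult_closed[OF that] assms(1) m_comm by auto
qed (use mult_closed ring_axioms in auto)

lemma (in cring) ideal_saturation_ideal:
  assumes I: "ideal I R" and c: "c \<in> carrier R"
  shows "ideal (ideal_saturation R I c) R"
proof (rule idealI_cring)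
  interpret ideal I R by (rule I)
  show "\<zero> \<in> ideal_saturation R I c"
    unfolding ideal_saturation_def using c by (auto intro: exI[of _ 0])
  show "a \<oplus> b \<in> ideal_saturation R I c"
    if sat: "a \<in> ideal_saturation R I c" "b \<in> ideal_saturation R I c" for a b
  proof -
    obtain n :: nat where a: "a \<in> carrier R" "a \<otimes> c [^] n \<in> I"
      using sat(1) unfolding ideal_saturation_def by blast
    obtain m :: nat where b: "b \<in> carrier R" "b \<otimes> c [^] m \<in> I"
      using sat(2) unfolding ideal_saturation_def by blast
    have "(a \<oplus> b) \<otimes> c [^] (n + m) = (a \<otimes> c [^] n) \<otimes> c [^] m \<oplus> (b \<otimes> c [^] m) \<otimes> c [^] n"
      using a b c by (simp add: nat_pow_mult[symmetric] l_distr m_assoc m_comm[of "c [^] n"])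
    also have "\<dots> \<in> I"
      using a b c by (simp add: I_r_closed a_closed)
    finally show ?thesis
      using a b unfolding ideal_saturation_def by blast
  qed
  show "x \<otimes> a \<in> ideal_saturation R I c"
    if sat: "a \<in> ideal_saturation R I c" and x: "x \<in> carrier R" for a x
  proof -
    obtain n :: nat where a: "a \<in> carrier R" "a \<otimes> c [^] n \<in> I"
      using sat unfolding ideal_saturation_def by blast
    have "(x \<otimes> a) \<otimes> c [^] n = x \<otimes> (a \<otimes> c [^] n)"
      using a c x by (simp add: m_assoc)
    also have "\<dots> \<in> I"
      using a(2) x by (rule I_l_closed)
    finally show ?thesis
      using a x unfolding ideal_saturation_def by blast
  qed
qed (auto simp: ideal_saturation_def)

lemma (in cring) ideal_rad_mult_closed:
  assumes "ideal I R" and "x \<in> ideal_rad R I" and "y \<in> carrier R"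
  shows "x \<otimes> y \<in> ideal_rad R I"
proof -
  obtain n :: nat where x: "x \<in> carrier R" "x [^] n \<in> I"
    using assms(2) unfolding ideal_rad_def by auto
  have "(x \<otimes> y) [^] n = x [^] n \<otimes> y [^] n"
    using x assms(3) by (simp add: nat_pow_distrib)
  also have "\<dots> \<in> I"
    using x assms by (simp add: ideal.I_r_closed)
  finally show ?thesis
    using x assms(3) unfolding ideal_rad_def by blast
qed

lemma (in cring) ideal_rad_of_square:
  assumes "x \<in> carrier R" and "x \<otimes> x \<in> ideal_rad R I"
  shows "x \<in> ideal_rad R I"
proof -
  obtain n :: nat where "(x \<otimes> x) [^] n \<in> I"
    using assms(2) unfolding ideal_rad_def by auto
  then have "x [^] (n + n) \<in> I"
    using assms(1) by (simp add: nat_pow_distrib nat_pow_mult)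
  then show ?thesis
    using assms(1) unfolding ideal_rad_def by blast
qed

lemma (in cring) ideal_rad_saturation_iff:
  assumes I: "ideal I R" and x: "x \<in> carrier R" and c: "c \<in> carrier R"
  shows "x \<in> ideal_rad R (ideal_saturation R I c) \<longleftrightarrow> x \<otimes> c \<in> ideal_rad R I"
proof
  assume "x \<in> ideal_rad R (ideal_saturation R I c)"
  then obtain n m :: nat where "x [^] n \<otimes> c [^] m \<in> I"
    unfolding ideal_rad_def ideal_saturation_def by auto
  then have "(x [^] n \<otimes> c [^] m) \<otimes> (x [^] m \<otimes> c [^] n) \<in> I"
    using x c I by (simp add: ideal.I_r_closed)
  moreover have "(x [^] n \<otimes> c [^] m) \<otimes> (x [^] m \<otimes> c [^] n) = (x \<otimes> c) [^] (n + m)"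
    using x c by (simp add: nat_pow_distrib nat_pow_mult[symmetric] m_ac)
  ultimately show "x \<otimes> c \<in> ideal_rad R I"
    using x c unfolding ideal_rad_def by auto
next
  assume "x \<otimes> c \<in> ideal_rad R I"
  then obtain n :: nat where "x [^] n \<otimes> c [^] n \<in> I"
    using x c unfolding ideal_rad_def by (auto simp: nat_pow_distrib)
  then show "x \<in> ideal_rad R (ideal_saturation R I c)"
    using x unfolding ideal_rad_def ideal_saturation_def by auto
qed

lemma (in cring) dense_subring_multiplier:
  assumes dense: "dense_subring A R" and I: "ideal I R"
    and b: "b \<in> carrier R" "b \<notin> ideal_rad R I"
  obtains a where "a \<in> carrier R" "a \<otimes> b \<in> A" "a \<otimes> b \<notin> ideal_rad R I"
proof -
  let ?J = "ideal_saturation R I b"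
  have "b \<notin> ideal_rad R ?J"
    using b ideal_rad_of_square ideal_rad_saturation_iff[OF I] by blast
  then obtain a where "a \<in> carrier R" "a \<notin> ideal_rad R ?J" "a \<otimes> b \<in> A"
    using dense ideal_saturation_ideal[OF I b(1)] b(1) unfolding dense_subring_def by blast
  then show ?thesis
    using that ideal_rad_saturation_iff[OF I _ b(1)] by blast
qed

lemma (in ring) subring_trans:
  assumes "subring K R" and "subring A (R\<lparr>carrier := K\<rparr>)"
  shows "subring A R"
proof -
  interpret K: ring "R\<lparr>carrier := K\<rparr>"
    by (rule subring_is_ring[OF assms(1)])
  have "A \<subseteq> K"
    using subringE(1)[OF assms(2)] by simp
  moreover have "ring (R\<lparr>carrier := A\<rparr>)"
    using K.subring_is_ring[OF assms(2)] by simp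
  ultimately show ?thesis
    using subring_iff subringE(1)[OF assms(1)] by blast
qed

lemma (in ring) ideal_subring_Int:
  assumes "subring K R" and "ideal I R"
  shows "ideal (K \<inter> I) (R\<lparr>carrier := K\<rparr>)"
proof -
  have "ring_hom_ring R R id"
    by (intro ring_hom_ringI2 ring_axioms id_ring_hom)
  then interpret ring_hom_ring "R\<lparr>carrier := K\<rparr>" R id
    by (rule ring_hom_ring.induced_ring_hom[OF _ assms(1)])
  show ?thesis
    using ideal_vimage[OF assms(2)] by (simp add: Int_def)
qed

lemma (in ring) ideal_rad_subring_Int:
  assumes "subring K R"
  shows "ideal_rad (R\<lparr>carrier := K\<rparr>) (K \<inter> I) = K \<inter> ideal_rad R I"
proof -
  interpret K: ring "R\<lparr>carrier := K\<rparr>"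
    by (rule subring_is_ring[OF assms])
  have "x [^] n \<in> K" if "x \<in> K" for x and n :: nat
    using K.nat_pow_closed[of x n] that by (simp add: nat_pow_consistent[symmetric])
  then show ?thesis
    using subringE(1)[OF assms] unfolding ideal_rad_def
    by (auto simp: nat_pow_consistent[symmetric])
qed

theorem theorem3p2:
  fixes C :: "('a, 'b) ring_scheme" and A B :: "'a set"
  assumes "cring C"
    and "subring B C"
    and "dense_subring A (C\<lparr>carrier := B\<rparr>)"
    and "dense_subring B C"
  shows "dense_subring A C"
proof -
  interpret C: cring C by fact
  let ?B = "C\<lparr>carrier := B\<rparr>"
  interpret B: cring ?B
    using C.subcring_iff C.subcringI'[OF assms(2)] subringE(1)[OF assms(2)] by blast
  have "subring A C"
    using C.subring_trans assms(2,3) unfolding dense_subring_def by blast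
  then show ?thesis
    unfolding dense_subring_def
  proof (intro conjI allI impI ballI)
    fix I c assume I: "ideal I C" and c: "c \<in> carrier C - ideal_rad C I"
    obtain d where d: "d \<in> carrier C" "d \<otimes>\<^bsub>C\<^esub> c \<in> B" "d \<otimes>\<^bsub>C\<^esub> c \<notin> ideal_rad C I"
      using C.dense_subring_multiplier[OF assms(4) I] c by blast
    then have "d \<otimes>\<^bsub>C\<^esub> c \<notin> ideal_rad ?B (B \<inter> I)"
      using C.ideal_rad_subring_Int[OF assms(2)] by blast
    then obtain a where a: "a \<in> B" "a \<otimes>\<^bsub>C\<^esub> (d \<otimes>\<^bsub>C\<^esub> c) \<in> A"
      "a \<otimes>\<^bsub>C\<^esub> (d \<otimes>\<^bsub>C\<^esub> c) \<notin> ideal_rad ?B (B \<inter> I)"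
      using B.dense_subring_multiplier[OF assms(3) C.ideal_subring_Int[OF assms(2) I]] d(2)
      by auto
    have "a \<in> carrier C"
      using a(1) subringE(1)[OF assms(2)] by blast
    then have "(a \<otimes>\<^bsub>C\<^esub> d) \<otimes>\<^bsub>C\<^esub> c \<in> A - ideal_rad C I"
      using a d c C.ideal_rad_subring_Int[OF assms(2)] subringE(6)[OF assms(2)]
      by (auto simp: C.m_assoc)
    then show "\<exists>a' \<in> carrier C - ideal_rad C I. a' \<otimes>\<^bsub>C\<^esub> c \<in> A"
      using C.ideal_rad_mult_closed[OF I] \<open>a \<in> carrier C\<close> d(1) c by blast
  qed
qed

end
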